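(* For $m=3$ objects, the game for SumLoss with top-1 feedback and binary relevance (loss matrix $L$ and feedback matrix $H$ as in the context) does not satisfy the local observability condition: there exists a pair of neighboring actions $i,j$ such that $\ell_i-\ell_j\notin\bigoplus_{k\in N^+_{i,j}}\mathrm{Col}(S_k^\top)$.
   Context: Objects are $\{1,\dots,m\}$. Learner actions are permutations $\sigma_1,\dots,\sigma_{m!}$ of $[m]$ ($\sigma(i)$ = rank of object $i$, $\sigma^{-1}(j)$ = object at rank $j$); adversary actions are $r_1,\dots,r_{2^m}$ enumerating $\{0,1\}^m$. Loss matrix: $L_{i,j}=\sum_{k=1}^m\sigma_i(k)r_j(k)$, rows $\ell_i$. Feedback matrix: $H_{i,j}=r_j(\sigma_i^{-1}(1))$. Signal matrix $S_i\in\{0,1\}^{2\times2^m}$: $(S_i)_{1,\ell}=\mathbb{1}(H_{i,\ell}=0)$, $(S_i)_{2,\ell}=\mathbb{1}(H_{i,\ell}=1)$. With $\Delta$ the probability simplex in $\mathbb{R}^{2^m}$, $C_i=\{p\in\Delta:\ell_i\cdot p\le\ell_k\cdot p\ \forall k\}$; action $i$ is Pareto-optimal if $C_i$ is non-empty and $(2^m-1)$-dimensional; Pareto-optimal $i,j$ are neighboring if $C_i\cap C_j$ is a $(2^m-2)$-dimensional polytope, and then $N^+_{i,j}=\{k\in[m!]:C_i\cap C_j\subseteq C_k\}$. A neighboring pair $i,j$ is locally observable if $\ell_i-\ell_j\in\bigoplus_{k\in N^+_{i,j}}\mathrm{Col}(S_k^\top)$; local observability holds if every neighboring pair is locally observable.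 *)

theory Defs
  imports "HOL-Analysis.Analysis"
begin

text \<open>Objects form a finite type 'o with m = CARD('o) elements.
  A learner action is a ranking sigma :: 'o => nat, a bijection onto {1..m}
  (sigma k = rank of object k).  Adversary actions are relevance vectors
  r :: 'o => bool (r k = True meaning relevance 1); there are 2^m of them.
  Vectors in R^(2^m) are indexed by the adversary actions: real ^ ('o => bool).\<close>

definition learner_actions :: "('o::finite \<Rightarrow> nat) set" where
  "learner_actions = {\<sigma>. bij_betw \<sigma> UNIV {1..CARD('o)}}"

definition rel :: "bool \<Rightarrow> real" where
  "rel b = (if b then 1 else 0)"

definition loss_vec :: "('o::finite \<Rightarrow> nat) \<Rightarrow> real ^ ('o \<Rightarrow> bool)" where
  "loss_vec \<sigma> = (\<chi> r. \<Sum>k\<in>UNIV. real (\<sigma> k) * rel (r k))"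

definition feedback :: "('o::finite \<Rightarrow> nat) \<Rightarrow> ('o \<Rightarrow> bool) \<Rightarrow> real" where
  "feedback \<sigma> r = rel (r (inv_into UNIV \<sigma> 1))"

definition signal_matrix :: "('o::finite \<Rightarrow> nat) \<Rightarrow> real ^ ('o \<Rightarrow> bool) ^ 2" where
  "signal_matrix \<sigma> = (\<chi> a r. if a = 1 then (if feedback \<sigma> r = 0 then 1 else 0)
                                      else (if feedback \<sigma> r = 1 then 1 else 0))"

definition col_space :: "real ^ 'n ^ 'm \<Rightarrow> (real ^ 'm) set" where
  "col_space A = range (\<lambda>x. A *v x)"

definition prob_simplex :: "(real ^ 'r::finite) set" where
  "prob_simplex = {p. (\<forall>r. 0 \<le> p $ r) \<and> (\<Sum>r\<in>UNIV. p $ r) = 1}"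

definition cell :: "('o::finite \<Rightarrow> nat) \<Rightarrow> (real ^ ('o \<Rightarrow> bool)) set" where
  "cell \<sigma> = {p \<in> prob_simplex. \<forall>\<tau>\<in>learner_actions. loss_vec \<sigma> \<bullet> p \<le> loss_vec \<tau> \<bullet> p}"

definition pareto_optimal :: "('o::finite \<Rightarrow> nat) \<Rightarrow> bool" where
  "pareto_optimal \<sigma> \<longleftrightarrow> \<sigma> \<in> learner_actions \<and> cell \<sigma> \<noteq> {} \<and>
     aff_dim (cell \<sigma>) = int (CARD('o \<Rightarrow> bool)) - 1"

text \<open>C_i \<inter> C_j is an intersection of finitely many halfspaces with the simplex, hence
  always a polytope; the condition is that it has dimension 2^m - 2.\<close>
definition neighboring :: "('o::finite \<Rightarrow> nat) \<Rightarrow> ('o \<Rightarrow> nat) \<Rightarrow> bool" where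
  "neighboring \<sigma> \<tau> \<longleftrightarrow> pareto_optimal \<sigma> \<and> pareto_optimal \<tau> \<and>
     cell \<sigma> \<inter> cell \<tau> \<noteq> {} \<and>
     aff_dim (cell \<sigma> \<inter> cell \<tau>) = int (CARD('o \<Rightarrow> bool)) - 2"

definition neighborhood_plus :: "('o::finite \<Rightarrow> nat) \<Rightarrow> ('o \<Rightarrow> nat) \<Rightarrow> ('o \<Rightarrow> nat) set" where
  "neighborhood_plus \<sigma> \<tau> = {\<kappa> \<in> learner_actions. cell \<sigma> \<inter> cell \<tau> \<subseteq> cell \<kappa>}"

text \<open>Sum (written as a direct sum in the paper) of the subspaces Col(S_k^T), k in N.\<close>
definition signal_sum :: "('o::finite \<Rightarrow> nat) set \<Rightarrow> (real ^ ('o \<Rightarrow> bool)) set" where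
  "signal_sum N = span (\<Union>\<kappa>\<in>N. col_space (transpose (signal_matrix \<kappa>)))"

definition locally_observable_pair :: "('o::finite \<Rightarrow> nat) \<Rightarrow> ('o \<Rightarrow> nat) \<Rightarrow> bool" where
  "locally_observable_pair \<sigma> \<tau> \<longleftrightarrow>
     loss_vec \<sigma> - loss_vec \<tau> \<in> signal_sum (neighborhood_plus \<sigma> \<tau>)"

definition local_observability :: "'o::finite itself \<Rightarrow> bool" where
  "local_observability _ \<longleftrightarrow>
     (\<forall>\<sigma> \<tau> :: 'o \<Rightarrow> nat. neighboring \<sigma> \<tau> \<longrightarrow> locally_observable_pair \<sigma> \<tau>)"

end

theory Submission
  imports Defs
begin

text \<open>Let \<open>\<sigma>\<close> rank the objects 1, 2, 3 in this order and let \<open>\<tau>\<close> swap the ranks of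
  objects 2 and 3. Since the loss is linear in the marginals \<open>P(r k = 1)\<close>, the cell of \<open>\<sigma>\<close>
  is cut out by \<open>P(r 1) \<ge> P(r 2) \<ge> P(r 3)\<close> and that of \<open>\<tau>\<close> by
  \<open>P(r 1) \<ge> P(r 3) \<ge> P(r 2)\<close>; interior points near the uniform distribution show that both
  cells are full-dimensional and meet in the facet \<open>P(r 2) = P(r 3)\<close>. The point mass on
  "only object 1 is relevant" lies in that facet, so every action in \<open>N\<^sup>+\<close> ranks object 1
  first. The signals of all these actions reveal only \<open>r 1\<close>, so their span consists of
  vectors depending on \<open>r 1\<close> alone, while \<open>\<ell>\<^sub>\<sigma> - \<ell>\<^sub>\<tau>\<close> distinguishes
  relevance vectors that agree in \<open>r 1\<close>.\<close>

definition marginal :: "'o::finite \<Rightarrow> real ^ ('o \<Rightarrow> bool) \<Rightarrow> real" where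
  "marginal k p = (\<chi> r. rel (r k)) \<bullet> p"

lemma loss_vec_eq_sum: "loss_vec \<kappa> = (\<Sum>k\<in>UNIV. real (\<kappa> k) *\<^sub>R (\<chi> r. rel (r k)))"
  by (simp add: loss_vec_def vec_eq_iff sum_component)

lemma inner_loss_vec: "loss_vec \<kappa> \<bullet> p = (\<Sum>k\<in>UNIV. real (\<kappa> k) * marginal k p)"
  by (simp add: loss_vec_eq_sum inner_sum_left marginal_def)

lemma marginal_axis: "marginal k (axis r 1) = rel (r k)"
  by (simp add: marginal_def inner_axis)

lemma marginal_add: "marginal k (p + p') = marginal k p + marginal k p'"
  and marginal_scaleR: "marginal k (c *\<^sub>R p) = c * marginal k p"
  by (simp_all add: marginal_def inner_add_right)

lemma continuous_on_marginal: "continuous_on S (marginal k)"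
  unfolding marginal_def by (intro continuous_intros)

definition uniform_dist :: "real ^ 'r::finite" where
  "uniform_dist = (\<chi> r. 1 / real CARD('r))"

lemma sum_rel_eq_half_card:
  fixes k :: "'o::finite"
  shows "(\<Sum>r\<in>UNIV. rel (r k)) = real CARD('o \<Rightarrow> bool) / 2"
proof -
  have flip: "(\<Sum>r\<in>UNIV. rel (r k)) = (\<Sum>r\<in>UNIV. rel (\<not> r k))"
    by (rule sum.reindex_bij_witness[where i = "\<lambda>r. r(k := \<not> r k)" and j = "\<lambda>r. r(k := \<not> r k)"])
       (auto simp: fun_upd_def)
  have "rel b + rel (\<not> b) = 1" for b
    by (simp add: rel_def)
  then have "(\<Sum>r\<in>UNIV. rel (r k)) + (\<Sum>r\<in>UNIV. rel (\<not> r k)) = real CARD('o \<Rightarrow> bool)"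
    by (simp add: sum.distrib[symmetric])
  with flip show ?thesis by simp
qed

lemma marginal_uniform_dist: "marginal k uniform_dist = 1 / 2"
  using sum_rel_eq_half_card[of k]
  by (simp add: marginal_def uniform_dist_def inner_vec_def sum_divide_distrib[symmetric])

lemma axis_in_prob_simplex: "axis r 1 \<in> prob_simplex"
  by (simp add: prob_simplex_def axis_def)

definition unit_mass_plane :: "(real ^ 'r::finite) set" where
  "unit_mass_plane = {p. 1 \<bullet> p = 1}"

lemma affine_unit_mass_plane: "affine unit_mass_plane"
  by (simp add: unit_mass_plane_def affine_hyperplane)

lemma aff_dim_unit_mass_plane: "aff_dim (unit_mass_plane :: (real ^ 'r::finite) set) = int CARD('r) - 1"
  by (simp add: unit_mass_plane_def)

lemma prob_simplex_subset_unit_mass_plane: "prob_simplex \<subseteq> unit_mass_plane"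
  by (auto simp: prob_simplex_def unit_mass_plane_def inner_vec_def)

lemma positive_in_prob_simplex: "p \<in> unit_mass_plane \<Longrightarrow> \<forall>r. 0 < p $ r \<Longrightarrow> p \<in> prob_simplex"
  by (auto simp: prob_simplex_def unit_mass_plane_def inner_vec_def less_imp_le)

lemma cell_subset_unit_mass_plane: "cell \<kappa> \<subseteq> unit_mass_plane"
  using prob_simplex_subset_unit_mass_plane by (auto simp: cell_def)

lemma open_positive_orthant: "open {p :: real ^ 'n. \<forall>i. 0 < p $ i}"
proof -
  have "{p :: real ^ 'n. \<forall>i. 0 < p $ i} = (\<Inter>i. {p. 0 < p $ i})"
    by auto
  then show ?thesis
    by (simp add: open_INT open_Collect_less continuous_on_component)
qed

lemma open_marginal_less: "open {p. marginal a p < marginal b p}"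
  by (intro open_Collect_less continuous_on_marginal)

lemma aff_dim_eq_if_open_slice:
  fixes S :: "'a::euclidean_space set"
  assumes "convex S" "open U" "S \<inter> U \<noteq> {}" "S \<inter> U \<subseteq> C" "C \<subseteq> S"
  shows "aff_dim C = aff_dim S"
  using aff_dim_convex_Int_open[OF assms(1-3)] aff_dim_subset[OF assms(4)] aff_dim_subset[OF assms(5)]
  by simp

definition depends_only_on :: "'o \<Rightarrow> (real ^ ('o::finite \<Rightarrow> bool)) set" where
  "depends_only_on k = {v. \<forall>r r'. r k = r' k \<longrightarrow> v $ r = v $ r'}"

lemma subspace_depends_only_on:
  fixes k :: "'o::finite"
  shows "subspace (depends_only_on k)"
  unfolding subspace_def depends_only_on_def
proof (intro conjI ballI allI impI CollectI)
  fix x y :: "real ^ ('o \<Rightarrow> bool)" and c :: real and r r' :: "'o \<Rightarrow> bool"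
  assume "r k = r' k"
  moreover assume "x \<in> {v. \<forall>r r'. r k = r' k \<longrightarrow> v $ r = v $ r'}"
  ultimately have x: "x $ r = x $ r'"
    by blast
  then show "(c *\<^sub>R x) $ r = (c *\<^sub>R x) $ r'"
    by simp
  assume "y \<in> {v. \<forall>r r'. r k = r' k \<longrightarrow> v $ r = v $ r'}"
  with \<open>r k = r' k\<close> have "y $ r = y $ r'"
    by blast
  with x show "(x + y) $ r = (x + y) $ r'"
    by simp
qed simp

lemma feedback_eq_rel_top:
  assumes "\<kappa> \<in> learner_actions" "\<kappa> k = 1"
  shows "feedback \<kappa> r = rel (r k)"
proof -
  have "inj \<kappa>"
    using assms(1) by (simp add: learner_actions_def bij_betw_imp_inj_on)
  then show ?thesis
    using assms(2) inv_into_f_f[of \<kappa> UNIV k] by (simp add: feedback_def)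
qed

lemma col_space_signal_matrix_subset:
  fixes \<kappa> :: "'o::finite \<Rightarrow> nat"
  assumes "\<kappa> \<in> learner_actions" "\<kappa> k = 1"
  shows "col_space (transpose (signal_matrix \<kappa>)) \<subseteq> depends_only_on k"
  unfolding col_space_def depends_only_on_def
proof (intro subsetI CollectI allI impI, elim rangeE)
  fix x v and r r' :: "'o \<Rightarrow> bool"
  assume "v = transpose (signal_matrix \<kappa>) *v x" "r k = r' k"
  then show "v $ r = v $ r'"
    by (simp add: matrix_vector_mult_def transpose_def signal_matrix_def feedback_eq_rel_top[OF assms])
qed

definition perturbed_uniform :: "'r::finite \<Rightarrow> 'r \<Rightarrow> real ^ 'r" where
  "perturbed_uniform r s = (1/2) *\<^sub>R uniform_dist + (1/4) *\<^sub>R axis r 1 + (1/4) *\<^sub>R axis s 1"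

lemma marginal_perturbed_uniform:
  "marginal k (perturbed_uniform r s) = 1/4 + (rel (r k) + rel (s k)) / 4"
  by (simp add: perturbed_uniform_def marginal_add marginal_scaleR marginal_axis marginal_uniform_dist)

lemma perturbed_uniform_in_unit_mass_plane:
  fixes r s :: "'r::finite"
  shows "perturbed_uniform r s \<in> unit_mass_plane"
proof -
  have "1 \<bullet> (uniform_dist :: real ^ 'r) = 1"
    by (simp add: uniform_dist_def inner_vec_def)
  then show ?thesis
    by (simp add: perturbed_uniform_def unit_mass_plane_def inner_add_right inner_axis)
qed

lemma perturbed_uniform_positive: "0 < perturbed_uniform r s $ i"
  by (simp add: perturbed_uniform_def uniform_dist_def axis_def add_pos_nonneg)

lemma inner_loss_vec_3:
  fixes \<kappa> :: "3 \<Rightarrow> nat"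
  shows "loss_vec \<kappa> \<bullet> p =
    real (\<kappa> 1) * marginal 1 p + real (\<kappa> 2) * marginal 2 p + real (\<kappa> 3) * marginal 3 p"
  unfolding inner_loss_vec UNIV_3 by (simp del: UNIV_3 add: sum.insert)

lemma learner_actions_3I:
  fixes \<kappa> :: "3 \<Rightarrow> nat"
  assumes "{\<kappa> 1, \<kappa> 2, \<kappa> 3} = {1, 2, 3}"
  shows "\<kappa> \<in> learner_actions"
proof -
  have "{1..CARD(3)} = {1, 2, 3 :: nat}"
    by auto
  with assms have range: "range \<kappa> = {1..CARD(3)}"
    by (simp only: UNIV_3 image_insert image_empty)
  then have "inj \<kappa>"
    by (intro eq_card_imp_inj_on) simp_all
  with range show ?thesis
    by (simp add: learner_actions_def bij_betw_def)
qed

lemma learner_actions_3_cases: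
  fixes \<kappa> :: "3 \<Rightarrow> nat"
  assumes "\<kappa> \<in> learner_actions"
  shows "(\<kappa> 1 = 1 \<and> \<kappa> 2 = 2 \<and> \<kappa> 3 = 3) \<or> (\<kappa> 1 = 1 \<and> \<kappa> 2 = 3 \<and> \<kappa> 3 = 2) \<or>
         (\<kappa> 1 = 2 \<and> \<kappa> 2 = 1 \<and> \<kappa> 3 = 3) \<or> (\<kappa> 1 = 2 \<and> \<kappa> 2 = 3 \<and> \<kappa> 3 = 1) \<or>
         (\<kappa> 1 = 3 \<and> \<kappa> 2 = 1 \<and> \<kappa> 3 = 2) \<or> (\<kappa> 1 = 3 \<and> \<kappa> 2 = 2 \<and> \<kappa> 3 = 1)"
proof -
  have bij: "bij_betw \<kappa> UNIV {1..3}"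
    using assms by (simp add: learner_actions_def)
  then have distinct: "\<kappa> 1 \<noteq> \<kappa> 2" "\<kappa> 1 \<noteq> \<kappa> 3" "\<kappa> 2 \<noteq> \<kappa> 3"
    using bij_betw_imp_inj_on[OF bij] by (auto dest: injD)
  have in_range: "\<kappa> k = 1 \<or> \<kappa> k = 2 \<or> \<kappa> k = 3" for k
  proof -
    have "\<kappa> k \<in> {1..3}"
      using bij_betwE[OF bij] by blast
    then show ?thesis
      by auto
  qed
  show ?thesis
    using distinct in_range[of 1] in_range[of 2] in_range[of 3] by (elim disjE; simp)
qed

definition rank_123 :: "3 \<Rightarrow> nat" where
  "rank_123 k = (if k = 1 then 1 else if k = 2 then 2 else 3)"

definition rank_132 :: "3 \<Rightarrow> nat" where
  "rank_132 k = (if k = 1 then 1 else if k = 2 then 3 else 2)"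

lemma rank_123_simps [simp]: "rank_123 1 = 1" "rank_123 2 = 2" "rank_123 3 = 3"
  and rank_132_simps [simp]: "rank_132 1 = 1" "rank_132 2 = 3" "rank_132 3 = 2"
  by (simp_all add: rank_123_def rank_132_def)

lemma rank_123_in_learner_actions: "rank_123 \<in> learner_actions"
  and rank_132_in_learner_actions: "rank_132 \<in> learner_actions"
  by (auto intro: learner_actions_3I)

lemma rank_123_in_cell:
  assumes "p \<in> prob_simplex" "marginal 2 p \<le> marginal 1 p" "marginal 3 p \<le> marginal 2 p"
  shows "p \<in> cell rank_123"
  unfolding cell_def
proof (intro CollectI conjI ballI)
  fix \<kappa> :: "3 \<Rightarrow> nat"
  assume "\<kappa> \<in> learner_actions"
  from learner_actions_3_cases[OF this] assms(2,3)
  show "loss_vec rank_123 \<bullet> p \<le> loss_vec \<kappa> \<bullet> p"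
    unfolding inner_loss_vec_3 by (elim disjE conjE; simp; linarith)
qed (fact assms(1))

lemma rank_132_in_cell:
  assumes "p \<in> prob_simplex" "marginal 3 p \<le> marginal 1 p" "marginal 2 p \<le> marginal 3 p"
  shows "p \<in> cell rank_132"
  unfolding cell_def
proof (intro CollectI conjI ballI)
  fix \<kappa> :: "3 \<Rightarrow> nat"
  assume "\<kappa> \<in> learner_actions"
  from learner_actions_3_cases[OF this] assms(2,3)
  show "loss_vec rank_132 \<bullet> p \<le> loss_vec \<kappa> \<bullet> p"
    unfolding inner_loss_vec_3 by (elim disjE conjE; simp; linarith)
qed (fact assms(1))

definition only_first_relevant :: "3 \<Rightarrow> bool" where
  "only_first_relevant k \<longleftrightarrow> k = 1"

lemma marginals_perturbed_uniform:
  "marginal 1 (perturbed_uniform (\<lambda>k. k \<noteq> 3) only_first_relevant) = 3/4"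
  "marginal 2 (perturbed_uniform (\<lambda>k. k \<noteq> 3) only_first_relevant) = 1/2"
  "marginal 3 (perturbed_uniform (\<lambda>k. k \<noteq> 3) only_first_relevant) = 1/4"
  "marginal 1 (perturbed_uniform (\<lambda>k. k \<noteq> 2) only_first_relevant) = 3/4"
  "marginal 2 (perturbed_uniform (\<lambda>k. k \<noteq> 2) only_first_relevant) = 1/4"
  "marginal 3 (perturbed_uniform (\<lambda>k. k \<noteq> 2) only_first_relevant) = 1/2"
  "marginal 1 (perturbed_uniform only_first_relevant only_first_relevant) = 3/4"
  "marginal 2 (perturbed_uniform only_first_relevant only_first_relevant) = 1/4"
  "marginal 3 (perturbed_uniform only_first_relevant only_first_relevant) = 1/4"
  by (simp_all add: marginal_perturbed_uniform only_first_relevant_def rel_def)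

lemma perturbed_uniform_in_prob_simplex: "perturbed_uniform r s \<in> prob_simplex"
  using perturbed_uniform_in_unit_mass_plane perturbed_uniform_positive
  by (blast intro: positive_in_prob_simplex)

lemma aff_dim_cell_rank_123: "aff_dim (cell rank_123) = int CARD(3 \<Rightarrow> bool) - 1"
proof -
  let ?U = "{p :: real ^ (3 \<Rightarrow> bool). \<forall>i. 0 < p $ i} \<inter>
    {p. marginal 2 p < marginal 1 p} \<inter> {p. marginal 3 p < marginal 2 p}"
  have "aff_dim (cell rank_123) = aff_dim (unit_mass_plane :: (real ^ (3 \<Rightarrow> bool)) set)"
  proof (rule aff_dim_eq_if_open_slice[where U = ?U])
    have "perturbed_uniform (\<lambda>k. k \<noteq> 3) only_first_relevant \<in> unit_mass_plane \<inter> ?U"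
      by (simp add: perturbed_uniform_in_unit_mass_plane perturbed_uniform_positive marginals_perturbed_uniform)
    then show "unit_mass_plane \<inter> ?U \<noteq> {}"
      by blast
    show "unit_mass_plane \<inter> ?U \<subseteq> cell rank_123"
      by (auto intro!: rank_123_in_cell positive_in_prob_simplex)
  qed (simp_all add: affine_imp_convex affine_unit_mass_plane open_Int open_positive_orthant
      open_marginal_less cell_subset_unit_mass_plane)
  then show ?thesis
    by (simp add: aff_dim_unit_mass_plane)
qed

lemma aff_dim_cell_rank_132: "aff_dim (cell rank_132) = int CARD(3 \<Rightarrow> bool) - 1"
proof -
  let ?U = "{p :: real ^ (3 \<Rightarrow> bool). \<forall>i. 0 < p $ i} \<inter>
    {p. marginal 3 p < marginal 1 p} \<inter> {p. marginal 2 p < marginal 3 p}"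
  have "aff_dim (cell rank_132) = aff_dim (unit_mass_plane :: (real ^ (3 \<Rightarrow> bool)) set)"
  proof (rule aff_dim_eq_if_open_slice[where U = ?U])
    have "perturbed_uniform (\<lambda>k. k \<noteq> 2) only_first_relevant \<in> unit_mass_plane \<inter> ?U"
      by (simp add: perturbed_uniform_in_unit_mass_plane perturbed_uniform_positive marginals_perturbed_uniform)
    then show "unit_mass_plane \<inter> ?U \<noteq> {}"
      by blast
    show "unit_mass_plane \<inter> ?U \<subseteq> cell rank_132"
      by (auto intro!: rank_132_in_cell positive_in_prob_simplex)
  qed (simp_all add: affine_imp_convex affine_unit_mass_plane open_Int open_positive_orthant
      open_marginal_less cell_subset_unit_mass_plane)
  then show ?thesis
    by (simp add: aff_dim_unit_mass_plane)
qed

lemma cell_rank_123_Int_cell_rank_132: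
  "cell rank_123 \<inter> cell rank_132 \<subseteq> unit_mass_plane \<inter> {p. marginal 2 p = marginal 3 p}"
proof
  fix p
  assume p: "p \<in> cell rank_123 \<inter> cell rank_132"
  then have "loss_vec rank_123 \<bullet> p = loss_vec rank_132 \<bullet> p"
    using rank_123_in_learner_actions rank_132_in_learner_actions
    by (auto simp: cell_def intro: order.antisym)
  then have "marginal 2 p = marginal 3 p"
    by (simp add: inner_loss_vec_3)
  with p cell_subset_unit_mass_plane show "p \<in> unit_mass_plane \<inter> {p. marginal 2 p = marginal 3 p}"
    by blast
qed

lemma marginal_tie_eq_hyperplane:
  "{p. marginal a p = marginal b p} = {p. ((\<chi> r. rel (r a)) - (\<chi> r. rel (r b))) \<bullet> p = 0}"
  by (simp add: marginal_def inner_diff_left)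

lemma aff_dim_tie_plane:
  "aff_dim (unit_mass_plane \<inter> {p :: real ^ (3 \<Rightarrow> bool). marginal 2 p = marginal 3 p}) =
    int CARD(3 \<Rightarrow> bool) - 2"
proof -
  define h :: "real ^ (3 \<Rightarrow> bool)" where "h = (\<chi> r. rel (r 2)) - (\<chi> r. rel (r 3))"
  have tie: "{p. marginal 2 p = marginal 3 p} = {p. h \<bullet> p = 0}"
    unfolding h_def by (rule marginal_tie_eq_hyperplane)
  have "perturbed_uniform only_first_relevant only_first_relevant \<in> unit_mass_plane \<inter> {p. h \<bullet> p = 0}"
    by (simp add: perturbed_uniform_in_unit_mass_plane marginals_perturbed_uniform flip: tie)
  moreover have "\<not> unit_mass_plane \<subseteq> {p. h \<bullet> p = 0}"
    using perturbed_uniform_in_unit_mass_plane[of "\<lambda>k. k \<noteq> 3" only_first_relevant]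
    by (auto simp: marginals_perturbed_uniform simp flip: tie)
  ultimately show ?thesis
    unfolding tie aff_dim_affine_Int_hyperplane[OF affine_unit_mass_plane]
    by (auto simp: aff_dim_unit_mass_plane)
qed

lemma aff_dim_cell_rank_123_Int_cell_rank_132:
  "aff_dim (cell rank_123 \<inter> cell rank_132) = int CARD(3 \<Rightarrow> bool) - 2"
proof -
  let ?T = "unit_mass_plane \<inter> {p :: real ^ (3 \<Rightarrow> bool). marginal 2 p = marginal 3 p}"
  let ?U = "{p :: real ^ (3 \<Rightarrow> bool). \<forall>i. 0 < p $ i} \<inter> {p. marginal 2 p < marginal 1 p}"
  have "aff_dim (cell rank_123 \<inter> cell rank_132) = aff_dim ?T"
  proof (rule aff_dim_eq_if_open_slice[where U = ?U])
    have "perturbed_uniform only_first_relevant only_first_relevant \<in> ?T \<inter> ?U"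
      by (simp add: perturbed_uniform_in_unit_mass_plane perturbed_uniform_positive marginals_perturbed_uniform)
    then show "?T \<inter> ?U \<noteq> {}"
      by blast
    show "?T \<inter> ?U \<subseteq> cell rank_123 \<inter> cell rank_132"
      by (auto intro!: rank_123_in_cell rank_132_in_cell positive_in_prob_simplex)
    show "convex ?T"
      unfolding marginal_tie_eq_hyperplane
      by (intro convex_Int affine_imp_convex affine_unit_mass_plane convex_hyperplane)
    show "open ?U"
      by (intro open_Int open_positive_orthant open_marginal_less)
  qed (rule cell_rank_123_Int_cell_rank_132)
  then show ?thesis
    by (simp add: aff_dim_tie_plane)
qed

lemma neighboring_rank_123_rank_132: "neighboring rank_123 rank_132"
proof -
  have "perturbed_uniform only_first_relevant only_first_relevant \<in> cell rank_123 \<inter> cell rank_132"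
    by (auto intro!: rank_123_in_cell rank_132_in_cell perturbed_uniform_in_prob_simplex
        simp: marginals_perturbed_uniform)
  then show ?thesis
    unfolding neighboring_def pareto_optimal_def
    using rank_123_in_learner_actions rank_132_in_learner_actions aff_dim_cell_rank_123
      aff_dim_cell_rank_132 aff_dim_cell_rank_123_Int_cell_rank_132
    by blast
qed

lemma neighborhood_plus_rank_123_rank_132:
  assumes "\<kappa> \<in> neighborhood_plus rank_123 rank_132"
  shows "\<kappa> \<in> learner_actions" "\<kappa> 1 = 1"
proof -
  have "axis only_first_relevant 1 \<in> cell rank_123 \<inter> cell rank_132"
    by (auto intro!: rank_123_in_cell rank_132_in_cell axis_in_prob_simplex
        simp: marginal_axis only_first_relevant_def rel_def)
  with assms have \<kappa>: "\<kappa> \<in> learner_actions" and "axis only_first_relevant 1 \<in> cell \<kappa>"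
    by (auto simp: neighborhood_plus_def)
  then show "\<kappa> \<in> learner_actions"
    by blast
  from \<open>axis only_first_relevant 1 \<in> cell \<kappa>\<close> rank_123_in_learner_actions
  have "loss_vec \<kappa> \<bullet> axis only_first_relevant 1 \<le> loss_vec rank_123 \<bullet> axis only_first_relevant 1"
    by (auto simp: cell_def)
  then have "\<kappa> 1 \<le> 1"
    by (simp add: inner_loss_vec_3 marginal_axis only_first_relevant_def rel_def)
  with learner_actions_3_cases[OF \<kappa>] show "\<kappa> 1 = 1"
    by auto
qed

lemma loss_difference_not_depends_only_on_top:
  "loss_vec rank_123 - loss_vec rank_132 \<notin> depends_only_on 1"
proof
  assume "loss_vec rank_123 - loss_vec rank_132 \<in> depends_only_on 1"
  then have "(loss_vec rank_123 - loss_vec rank_132) $ (\<lambda>k. False) =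
      (loss_vec rank_123 - loss_vec rank_132) $ (\<lambda>k. k = 3)"
    unfolding depends_only_on_def by simp
  moreover have "loss_vec \<kappa> $ r = loss_vec \<kappa> \<bullet> axis r 1" for \<kappa> :: "3 \<Rightarrow> nat" and r
    by (simp add: inner_axis)
  ultimately show False
    by (simp add: inner_loss_vec_3 marginal_axis rel_def)
qed

theorem theorem2:
  shows "\<exists>\<sigma> \<tau> :: 3 \<Rightarrow> nat. neighboring \<sigma> \<tau> \<and>
           loss_vec \<sigma> - loss_vec \<tau> \<notin> signal_sum (neighborhood_plus \<sigma> \<tau>)"
proof (intro exI conjI)
  show "neighboring rank_123 rank_132"
    by (rule neighboring_rank_123_rank_132)
  have "signal_sum (neighborhood_plus rank_123 rank_132) \<subseteq> depends_only_on 1"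
    unfolding signal_sum_def
    using neighborhood_plus_rank_123_rank_132 col_space_signal_matrix_subset
    by (intro span_minimal subspace_depends_only_on) blast
  with loss_difference_not_depends_only_on_top
  show "loss_vec rank_123 - loss_vec rank_132 \<notin> signal_sum (neighborhood_plus rank_123 rank_132)"
    by blast
qed

end
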